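(* There exists $\theta_1\in(0,\pi/8)$, depending only on $\alpha$, such that for every $\theta\in(0,\theta_1)$ the following holds. If $p,q\in\mathbb H$ satisfy $z_q\le0$, $z_p\le0$, $\rho_q\le\rho_p$, $p,q\in\mathcal C(\theta)$, $q\notin B(p,r_p)$ and $p\notin B(q,r_q)$, then $z_q<2z_p$ and $\rho_q<\rho_p\cos(2\theta)$.
   Context: $\mathbb H=\mathbb R^3$, $p=(x_p,y_p,z_p)$, $\rho_p=\sqrt{x_p^2+y_p^2}$, group law $(x,y,z)\cdot(x',y',z')=(x+x',y+y',z+z'+\tfrac12(xy'-yx'))$, dilations $\delta_\lambda(x,y,z)=(\lambda x,\lambda y,\lambda^2z)$. Fix $\alpha>0$ such that $d_\alpha(p,q)=\inf\{r>0:\delta_{1/r}(p^{-1}\cdot q)\in B_\alpha\}$ is a distance, $B_\alpha$ the closed Euclidean ball of radius $\alpha$ at $0$. $B(p,r)=\{q:d_\alpha(q,p)\le r\}$, $r_p=d_\alpha(0,p)$. $\mathcal C(\theta)=\{p:|y_p|<x_p\tan\theta\}$. *)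

theory Defs
  imports "HOL-Analysis.Analysis"
begin

type_synonym heis = "real \<times> real \<times> real"

definition hmult :: "heis \<Rightarrow> heis \<Rightarrow> heis" where
  "hmult p q = (case p of (x, y, z) \<Rightarrow> case q of (x', y', z') \<Rightarrow>
      (x + x', y + y', z + z' + (x * y' - y * x') / 2))"

definition hinv :: "heis \<Rightarrow> heis" where
  "hinv p = (case p of (x, y, z) \<Rightarrow> (-x, -y, -z))"

definition hdil :: "real \<Rightarrow> heis \<Rightarrow> heis" where
  "hdil l p = (case p of (x, y, z) \<Rightarrow> (l * x, l * y, l^2 * z))"

definition xc :: "heis \<Rightarrow> real" where "xc p = fst p"
definition yc :: "heis \<Rightarrow> real" where "yc p = fst (snd p)"
definition zc :: "heis \<Rightarrow> real" where "zc p = snd (snd p)"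

definition rho :: "heis \<Rightarrow> real" where
  "rho p = sqrt ((xc p)^2 + (yc p)^2)"

definition Bball :: "real \<Rightarrow> heis set" where
  "Bball a = {p. sqrt ((xc p)^2 + (yc p)^2 + (zc p)^2) \<le> a}"

definition d_alpha :: "real \<Rightarrow> heis \<Rightarrow> heis \<Rightarrow> real" where
  "d_alpha a p q = Inf {r. r > 0 \<and> hdil (1 / r) (hmult (hinv p) q) \<in> Bball a}"

definition is_distance :: "(heis \<Rightarrow> heis \<Rightarrow> real) \<Rightarrow> bool" where
  "is_distance d \<longleftrightarrow>
     (\<forall>p q. 0 \<le> d p q) \<and> (\<forall>p q. d p q = 0 \<longleftrightarrow> p = q) \<and>
     (\<forall>p q. d p q = d q p) \<and> (\<forall>p q s. d p s \<le> d p q + d q s)"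

definition hball :: "real \<Rightarrow> heis \<Rightarrow> real \<Rightarrow> heis set" where
  "hball a p r = {q. d_alpha a q p \<le> r}"

definition rr :: "real \<Rightarrow> heis \<Rightarrow> real" where
  "rr a p = d_alpha a (0, 0, 0) p"

definition cone :: "real \<Rightarrow> heis set" where
  "cone \<theta> = {p. \<bar>yc p\<bar> < xc p * tan \<theta>}"

end

theory Submission
  imports Defs
begin

(* Write Z = -z >= 0 for the (non-positive) heights and N = r_p, M = r_q for the
   gauge norms.  Unfolding d_alpha, membership of w in the ball of radius r around 0
   is the polynomial inequality (x_w^2 + y_w^2) r^2 + z_w^2 <= alpha^2 r^4, and the
   infimum defining r_p is attained.  Hence "q lies outside B(p, r_p)" yields
   |p - q|^2 N^2 + c^2 > alpha^2 N^4 >= rho_p^2 N^2 + z_p^2, where c is the height of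
   q^-1 p and differs from z_p - z_q by the twist term K/2, K = x_q y_p - y_q x_p.
   If z_q >= 2 z_p, then |c| <= Z_p + |K|/2, and this gives outside_norm_ball:
       0 < (|p - q|^2 - rho_p^2) N^2 + alpha N^2 |K| + K^2/4.
   In the cone C(theta) with T = tan theta the horizontal parts are almost parallel:
   |K| <= 2 T rho_p rho_q and <p,q> >= (1 - 2T^2) rho_p rho_q (cone_pair_bounds), so
   for T alpha small the right-hand side is negative: this is z_separation.  The same
   argument with the roles of p and q exchanged, now knowing z_q < 2 z_p, shows
   rho_q < (1 - 2T^2) rho_p (rho_separation).  Finally 1 - 2 tan^2 theta <= cos 2theta,
   and theta_1 = min (pi/16) (arctan (1/(8(alpha+1)))) makes T alpha small enough. *)

lemma hmult_hinv_coords: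
  "xc (hmult (hinv u) v) = xc v - xc u"
  "yc (hmult (hinv u) v) = yc v - yc u"
  "zc (hmult (hinv u) v) = zc v - zc u - (xc u * yc v - yc u * xc v) / 2"
  by (auto simp: hmult_def hinv_def xc_def yc_def zc_def field_simps split: prod.splits)

lemma rho_sq: "rho u^2 = xc u^2 + yc u^2"
  by (simp add: rho_def)

lemma hinv_origin_mult: "hmult (hinv (0, 0, 0)) p = p"
  by (simp add: hmult_def hinv_def split: prod.splits)

lemma rho_ge_xc: "xc p \<le> rho p"
  by (simp add: rho_def real_le_rsqrt)

lemma hdil_in_Bball_iff:
  assumes "\<alpha> \<ge> 0" "r > 0"
  shows "hdil (1/r) w \<in> Bball \<alpha> \<longleftrightarrow> (xc w^2 + yc w^2) * r^2 + zc w^2 \<le> \<alpha>^2 * r^4"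
proof -
  have "hdil (1/r) w \<in> Bball \<alpha> \<longleftrightarrow> (xc w/r)^2 + (yc w/r)^2 + (zc w/r^2)^2 \<le> \<alpha>^2"
    using assms by (auto simp: hdil_def Bball_def xc_def yc_def zc_def power_divide
        real_sqrt_le_iff' split: prod.splits)
  also have "\<dots> \<longleftrightarrow> ((xc w/r)^2 + (yc w/r)^2 + (zc w/r^2)^2) * r^4 \<le> \<alpha>^2 * r^4"
    using assms by simp
  also have "((xc w/r)^2 + (yc w/r)^2 + (zc w/r^2)^2) * r^4 = (xc w^2 + yc w^2) * r^2 + zc w^2"
    using assms by (simp add: field_simps power2_eq_square power4_eq_xxxx)
  finally show ?thesis .
qed

lemma d_alpha_gt_outside:
  assumes "\<alpha> \<ge> 0" "R > 0" "R < d_alpha \<alpha> u v"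
  defines "w \<equiv> hmult (hinv u) v"
  shows "\<alpha>^2 * R^4 < (xc w^2 + yc w^2) * R^2 + zc w^2"
proof (rule ccontr)
  let ?S = "{r. r > 0 \<and> hdil (1 / r) w \<in> Bball \<alpha>}"
  assume "\<not> ?thesis"
  hence "R \<in> ?S" using hdil_in_Bball_iff[OF assms(1,2)] assms(2) by auto
  moreover have "bdd_below ?S" by (rule bdd_belowI[where m=0]) auto
  ultimately have "Inf ?S \<le> R" by (rule cInf_lower)
  with assms(3) show False unfolding d_alpha_def w_def by simp
qed

lemma Bball_dilation_large:
  fixes \<alpha> m a b c :: real
  assumes "\<alpha> > 0"
  shows "\<exists>r\<ge>m. (a^2 + b^2) * r^2 + c^2 \<le> \<alpha>^2 * r^4"
proof -
  define K where "K = a^2 + b^2 + c^2"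
  define r where "r = max 1 (max m (K / \<alpha>^2))"
  have r: "1 \<le> r" "m \<le> r" "K / \<alpha>^2 \<le> r" by (auto simp: r_def)
  hence "K \<le> \<alpha>^2 * r" using assms by (simp add: divide_le_eq mult.commute)
  have "(a^2 + b^2) * r^2 + c^2 \<le> K * r^2"
  proof -
    have "c^2 * 1 \<le> c^2 * r^2" using r(1) by (intro mult_left_mono) (auto simp: one_le_power)
    thus ?thesis by (simp add: K_def algebra_simps)
  qed
  also have "\<dots> \<le> (\<alpha>^2 * r^2) * r^2"
  proof (rule mult_right_mono)
    have "\<alpha>^2 * r \<le> \<alpha>^2 * r^2" using r(1) by (intro mult_left_mono) (auto simp: power2_eq_square)
    thus "K \<le> \<alpha>^2 * r^2" using \<open>K \<le> \<alpha>^2 * r\<close> by linarith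
  qed simp
  also have "\<dots> = \<alpha>^2 * r^4" by (simp add: power4_eq_xxxx power2_eq_square)
  finally show ?thesis using r(2) by blast
qed

lemma dilation_radius_lower:
  fixes \<alpha> r s z :: real
  assumes "\<alpha> \<ge> 0" "r > 0" "s \<ge> 0" "s^2 * r^2 + z^2 \<le> \<alpha>^2 * r^4"
  shows "s \<le> \<alpha> * r"
proof -
  have "(\<alpha> * r)^2 * r^2 = \<alpha>^2 * r^4" by (simp add: power_mult_distrib power4_eq_xxxx power2_eq_square)
  hence "s^2 * r^2 \<le> (\<alpha> * r)^2 * r^2" using assms(4) zero_le_power2[of z] by linarith
  hence "s^2 \<le> (\<alpha> * r)^2" using assms(2) by simp
  thus ?thesis by (rule power2_le_imp_le) (simp add: assms(1,2) less_imp_le)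
qed

(* Off the vertical axis the infimum defining the norm r_p is positive and attained,
   since the admissible radii form a nonempty closed set bounded below by rho_p / alpha. *)
lemma rr_attained:
  assumes "\<alpha> > 0" "0 < rho p"
  shows "0 < rr \<alpha> p" "rho p^2 * (rr \<alpha> p)^2 + zc p^2 \<le> \<alpha>^2 * (rr \<alpha> p)^4"
proof -
  define m where "m = rho p / \<alpha>"
  define S where "S = {r. r > 0 \<and> hdil (1 / r) (hmult (hinv (0, 0, 0)) p) \<in> Bball \<alpha>}"
  have m: "m > 0" using assms by (simp add: m_def)
  have S_eq: "S = {r. m \<le> r \<and> rho p^2 * r^2 + zc p^2 \<le> \<alpha>^2 * r^4}"
  proof -
    have "m \<le> r" if "r > 0" "rho p^2 * r^2 + zc p^2 \<le> \<alpha>^2 * r^4" for r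
      using dilation_radius_lower[of \<alpha> r "rho p" "zc p"] that assms
      by (simp add: m_def divide_le_eq mult.commute)
    moreover have "r \<in> S \<longleftrightarrow> r > 0 \<and> rho p^2 * r^2 + zc p^2 \<le> \<alpha>^2 * r^4" for r
      using hdil_in_Bball_iff[of \<alpha> r p] assms(1)
      by (auto simp: S_def hinv_origin_mult rho_sq)
    ultimately show ?thesis using m by fastforce
  qed
  have "closed S" unfolding S_eq
    by (intro closed_Collect_conj closed_Collect_le continuous_intros)
  moreover have "S \<noteq> {}"
    using Bball_dilation_large[OF assms(1), of m "rho p" 0 "zc p"] by (auto simp: S_eq)
  moreover have "bdd_below S" unfolding S_def by (rule bdd_belowI[where m = 0]) auto
  ultimately have "Inf S \<in> S" by (intro closed_contains_Inf)
  moreover have "rr \<alpha> p = Inf S" by (simp add: S_def rr_def d_alpha_def)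
  ultimately show "0 < rr \<alpha> p" "rho p^2 * (rr \<alpha> p)^2 + zc p^2 \<le> \<alpha>^2 * (rr \<alpha> p)^4"
    using m by (auto simp: S_eq)
qed

lemma rho_le_alpha_rr:
  assumes "\<alpha> > 0" "0 < rho p"
  shows "rho p \<le> \<alpha> * rr \<alpha> p"
  using dilation_radius_lower[of \<alpha> "rr \<alpha> p" "rho p" "zc p"] rr_attained[OF assms] assms by simp

lemma outside_norm_ball:
  assumes "\<alpha> > 0" "0 < rho v" "u \<notin> hball \<alpha> v (rr \<alpha> v)"
    and z: "\<bar>zc v - zc u\<bar> \<le> - zc v"
  defines "N \<equiv> rr \<alpha> v" and "K \<equiv> xc u * yc v - yc u * xc v"
  shows "0 < ((xc v - xc u)^2 + (yc v - yc u)^2 - rho v^2) * N^2 + \<alpha> * N^2 * \<bar>K\<bar> + K^2 / 4"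
proof -
  define c where "c = zc v - zc u - K / 2"
  have N: "0 < N" and own: "rho v^2 * N^2 + zc v^2 \<le> \<alpha>^2 * N^4"
    using rr_attained[OF assms(1,2)] by (simp_all add: N_def)
  have "N < d_alpha \<alpha> u v" using assms(3) by (simp add: hball_def N_def)
  hence out: "\<alpha>^2 * N^4 < ((xc v - xc u)^2 + (yc v - yc u)^2) * N^2 + c^2"
    using d_alpha_gt_outside[OF _ N] assms(1) by (simp add: hmult_hinv_coords c_def K_def)
  have "\<bar>c\<bar> \<le> - zc v + \<bar>K\<bar> / 2"
    using z abs_triangle_ineq4[of "zc v - zc u" "K / 2"] by (simp add: c_def)
  hence "c^2 \<le> (- zc v + \<bar>K\<bar> / 2)^2"
    by (metis abs_ge_zero abs_le_square_iff abs_of_nonneg order.trans)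
  hence c2: "c^2 \<le> zc v^2 + (- zc v) * \<bar>K\<bar> + K^2 / 4"
    by (simp add: power2_eq_square algebra_simps)
  have "(\<alpha> * N^2)^2 = \<alpha>^2 * N^4" by (simp add: power_mult_distrib power4_eq_xxxx power2_eq_square)
  moreover have "0 \<le> rho v^2 * N^2" by simp
  ultimately have "(- zc v)^2 \<le> (\<alpha> * N^2)^2" using own by (subst power2_minus) linarith
  hence "- zc v \<le> \<alpha> * N^2" by (rule power2_le_imp_le) (simp add: assms(1) less_imp_le)
  hence "(- zc v) * \<bar>K\<bar> \<le> \<alpha> * N^2 * \<bar>K\<bar>" by (rule mult_right_mono) simp
  moreover have "((xc v - xc u)^2 + (yc v - yc u)^2 - rho v^2) * N^2
      = ((xc v - xc u)^2 + (yc v - yc u)^2) * N^2 - rho v^2 * N^2"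
    by (simp add: algebra_simps)
  ultimately show ?thesis using own out c2 by linarith
qed

lemma cone_pair_bounds:
  fixes T x1 y1 x2 y2 :: real
  assumes T: "0 \<le> T" and x: "0 < x1" "0 < x2" and y: "\<bar>y1\<bar> \<le> T * x1" "\<bar>y2\<bar> \<le> T * x2"
  defines "r1 \<equiv> sqrt (x1^2 + y1^2)" and "r2 \<equiv> sqrt (x2^2 + y2^2)"
  shows "\<bar>x1 * y2 - y1 * x2\<bar> \<le> 2 * T * (r1 * r2)"
    and "(1 - 2 * T^2) * (r1 * r2) \<le> x1 * x2 + y1 * y2"
proof -
  have xr: "x1 \<le> r1" "x2 \<le> r2" unfolding r1_def r2_def by (simp_all add: real_le_rsqrt)
  hence xxr: "x1 * x2 \<le> r1 * r2" using x by (intro mult_mono) auto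
  have yy: "\<bar>y1\<bar> * \<bar>y2\<bar> \<le> (T * x1) * (T * x2)" using y by (intro mult_mono) auto
  have "\<bar>x1 * y2 - y1 * x2\<bar> \<le> x1 * \<bar>y2\<bar> + \<bar>y1\<bar> * x2"
    using x abs_triangle_ineq4[of "x1 * y2" "y1 * x2"] by (simp add: abs_mult)
  also have "\<dots> \<le> x1 * (T * x2) + (T * x1) * x2"
    using x y by (intro add_mono mult_left_mono mult_right_mono) auto
  also have "\<dots> = 2 * T * (x1 * x2)" by simp
  also have "\<dots> \<le> 2 * T * (r1 * r2)" using T xxr by (intro mult_left_mono) auto
  finally show "\<bar>x1 * y2 - y1 * x2\<bar> \<le> 2 * T * (r1 * r2)" .
  have sq: "r1^2 = x1^2 + y1^2" "r2^2 = x2^2 + y2^2" by (simp_all add: r1_def r2_def)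
  have "\<bar>y1\<bar>^2 \<le> (T * x1)^2" "\<bar>y2\<bar>^2 \<le> (T * x2)^2"
    using y by (simp_all only: abs_le_square_iff[symmetric] abs_mult abs_of_pos[OF x(1)] abs_of_pos[OF x(2)]
      abs_of_nonneg[OF T] abs_abs)
  hence "r1^2 \<le> (1 + T^2) * x1^2" "r2^2 \<le> (1 + T^2) * x2^2"
    by (simp_all add: sq power_mult_distrib algebra_simps)
  hence "(r1 * r2)^2 \<le> ((1 + T^2) * x1^2) * ((1 + T^2) * x2^2)"
    by (simp add: power_mult_distrib mult_mono)
  also have "\<dots> = ((1 + T^2) * (x1 * x2))^2" by (simp add: power_mult_distrib power2_eq_square)
  finally have rr: "r1 * r2 \<le> (1 + T^2) * (x1 * x2)"
    by (rule power2_le_imp_le) (use x in simp)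
  have "(1 - 2 * T^2) * (r1 * r2) = r1 * r2 - 2 * T^2 * (r1 * r2)" by (simp add: algebra_simps)
  also have "\<dots> \<le> (1 + T^2) * (x1 * x2) - 2 * T^2 * (x1 * x2)"
    using rr xxr by (intro diff_mono mult_left_mono) auto
  also have "\<dots> = x1 * x2 - (T * x1) * (T * x2)" by (simp add: power2_eq_square algebra_simps)
  also have "\<dots> \<le> x1 * x2 - \<bar>y1\<bar> * \<bar>y2\<bar>" using yy by simp
  also have "\<dots> \<le> x1 * x2 + y1 * y2" by (simp add: abs_mult[symmetric])
  finally show "(1 - 2 * T^2) * (r1 * r2) \<le> x1 * x2 + y1 * y2" .
qed

lemma twist_terms_bound:
  fixes \<alpha> T N K X Y :: real
  assumes "0 \<le> \<alpha>" "0 \<le> T" "\<bar>K\<bar> \<le> 2 * T * Y" "Y \<le> X" "Y^2 \<le> X * (\<alpha> * N)^2"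
  shows "\<alpha> * N^2 * \<bar>K\<bar> + K^2 / 4 \<le> (2 * (T * \<alpha>) + (T * \<alpha>)^2) * (X * N^2)"
proof -
  have "2 * T * Y \<le> 2 * T * X" using assms(2,4) by (intro mult_left_mono) auto
  hence "\<alpha> * N^2 * \<bar>K\<bar> \<le> \<alpha> * N^2 * (2 * T * X)"
    using assms(1,3) by (intro mult_left_mono) auto
  moreover have "K^2 \<le> (2 * T * Y)^2"
    using power_mono[OF assms(3) abs_ge_zero, of 2] by simp
  moreover have "(2 * T * Y)^2 \<le> 4 * T^2 * (X * (\<alpha> * N)^2)"
    using assms(5) by (simp add: power_mult_distrib mult_left_mono)
  ultimately show ?thesis by (simp add: power_mult_distrib algebra_simps)
qed

lemma small_cone_constants:
  fixes T \<alpha> :: real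
  assumes "0 < T" "0 < \<alpha>" "8 * T * (\<alpha> + 1) \<le> 1"
  defines "C \<equiv> 1 - 2 * T^2"
  shows "0 \<le> C" and "2 * (T * \<alpha>) + (T * \<alpha>)^2 < 2 * C^2 - 1"
    and "2 * (T * \<alpha>) + (T * \<alpha>)^2 < 2 * C - 1"
proof -
  have "0 < T * \<alpha>" using assms(1,2) by simp
  moreover have "8 * T * (\<alpha> + 1) = 8 * (T * \<alpha>) + 8 * T" by (simp add: algebra_simps)
  ultimately have a: "0 < T * \<alpha>" "T * \<alpha> \<le> 1/8" "T \<le> 1/8" using assms(1,3) by linarith+
  have "(T * \<alpha>) * (T * \<alpha>) \<le> (1/8) * (1/8)" "T * T \<le> (1/8) * (1/8)"
    using a assms(1) by (intro mult_mono; simp)+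
  hence "(T * \<alpha>)^2 \<le> 1/64" "T^2 \<le> 1/64" by (simp_all add: power2_eq_square)
  hence small: "2 * (T * \<alpha>) + (T * \<alpha>)^2 \<le> 17/64" and C: "31/32 \<le> C" "C \<le> 1"
    using a by (auto simp: C_def)
  show "0 \<le> C" using C by simp
  have "(31/32) * (31/32) \<le> C * C" using C by (intro mult_mono) auto
  thus "2 * (T * \<alpha>) + (T * \<alpha>)^2 < 2 * C^2 - 1" using small by (simp add: power2_eq_square)
  have "C * C \<le> C" using C by (simp add: mult_left_le)
  with \<open>2 * (T * \<alpha>) + (T * \<alpha>)^2 < 2 * C^2 - 1\<close>
  show "2 * (T * \<alpha>) + (T * \<alpha>)^2 < 2 * C - 1" by (simp add: power2_eq_square)
qed

lemma z_separation:
  assumes \<alpha>: "\<alpha> > 0" and T: "0 < T" "8 * T * (\<alpha> + 1) \<le> 1"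
    and p: "0 < xc p" "\<bar>yc p\<bar> \<le> T * xc p" and q: "0 < xc q" "\<bar>yc q\<bar> \<le> T * xc q"
    and z: "zc p \<le> 0" "zc q \<le> 0" and rqp: "rho q \<le> rho p"
    and far: "q \<notin> hball \<alpha> p (rr \<alpha> p)"
  shows "zc q < 2 * zc p"
proof (rule ccontr)
  define N where "N = rr \<alpha> p"
  define K where "K = xc q * yc p - yc q * xc p"
  define C where "C = 1 - 2 * T^2"
  define P where "P = rho p * rho q * N^2"
  define D where "D = (xc p - xc q)^2 + (yc p - yc q)^2"
  assume "\<not> zc q < 2 * zc p"
  hence "\<bar>zc p - zc q\<bar> \<le> - zc p" using z by linarith
  have rp: "0 < rho p" and rq: "0 < rho q" using p(1) q(1) rho_ge_xc[of p] rho_ge_xc[of q] by linarith+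
  have key: "0 < (D - rho p^2) * N^2 + (\<alpha> * N^2 * \<bar>K\<bar> + K^2 / 4)"
    using outside_norm_ball[OF \<alpha> rp far \<open>\<bar>zc p - zc q\<bar> \<le> - zc p\<close>] by (simp add: D_def N_def K_def)
  have K: "\<bar>K\<bar> \<le> 2 * T * (rho p * rho q)" and ip: "C * (rho p * rho q) \<le> xc q * xc p + yc q * yc p"
    using cone_pair_bounds[OF less_imp_le[OF T(1)] q(1) p(1) q(2) p(2)]
    by (simp_all add: K_def C_def rho_def ac_simps)
  \<comment> \<open>the horizontal displacement is too short to leave the ball around \<open>p\<close>\<close>
  have "rho q^2 \<le> rho p * rho q" using mult_right_mono[OF rqp, of "rho q"] rq by (simp add: power2_eq_square)
  hence "D - rho p^2 \<le> (1 - 2 * C) * (rho p * rho q)"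
    using ip unfolding D_def rho_sq by (simp add: power2_eq_square algebra_simps)
  hence "(D - rho p^2) * N^2 \<le> ((1 - 2 * C) * (rho p * rho q)) * N^2" by (rule mult_right_mono) simp
  hence horizontal: "(D - rho p^2) * N^2 \<le> (1 - 2 * C) * P" by (simp add: P_def mult.assoc)
  \<comment> \<open>the twist contributed by the group law is small in a thin cone\<close>
  have "rho p * rho q \<le> (\<alpha> * N) * (\<alpha> * N)"
    using rqp rho_le_alpha_rr[OF \<alpha> rp] rp rq by (intro mult_mono) (auto simp: N_def)
  hence "(rho p * rho q)^2 \<le> (rho p * rho q) * (\<alpha> * N)^2"
    using rp rq by (simp add: power2_eq_square mult_left_mono)
  hence twist: "\<alpha> * N^2 * \<bar>K\<bar> + K^2 / 4 \<le> (2 * (T * \<alpha>) + (T * \<alpha>)^2) * P"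
    using twist_terms_bound[OF less_imp_le[OF \<alpha>] less_imp_le[OF T(1)] K order.refl] by (simp add: P_def)
  have "0 < (1 - 2 * C + 2 * (T * \<alpha>) + (T * \<alpha>)^2) * P"
    using key horizontal twist by (simp add: algebra_simps)
  moreover have "0 \<le> P" by (simp add: P_def rp rq less_imp_le)
  moreover have "1 - 2 * C + 2 * (T * \<alpha>) + (T * \<alpha>)^2 < 0"
    using small_cone_constants(3)[OF T(1) \<alpha> T(2)] by (simp add: C_def)
  ultimately show False
    using mult_nonpos_nonneg[of "1 - 2 * C + 2 * (T * \<alpha>) + (T * \<alpha>)^2" P] by linarith
qed

lemma rho_separation:
  assumes \<alpha>: "\<alpha> > 0" and T: "0 < T" "8 * T * (\<alpha> + 1) \<le> 1"
    and p: "0 < xc p" "\<bar>yc p\<bar> \<le> T * xc p" and q: "0 < xc q" "\<bar>yc q\<bar> \<le> T * xc q"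
    and z: "zc p \<le> 0" "zc q < 2 * zc p" and rqp: "rho q \<le> rho p"
    and far: "p \<notin> hball \<alpha> q (rr \<alpha> q)"
  shows "rho q < (1 - 2 * T^2) * rho p"
proof (rule ccontr)
  define M where "M = rr \<alpha> q"
  define K where "K = xc p * yc q - yc p * xc q"
  define C where "C = 1 - 2 * T^2"
  define Q where "Q = rho p^2 * M^2"
  define D where "D = (xc q - xc p)^2 + (yc q - yc p)^2"
  assume "\<not> rho q < (1 - 2 * T^2) * rho p"
  hence rqC: "C * rho p \<le> rho q" by (simp add: C_def)
  have "\<bar>zc q - zc p\<bar> \<le> - zc q" using z by linarith
  have rp: "0 < rho p" and rq: "0 < rho q" using p(1) q(1) rho_ge_xc[of p] rho_ge_xc[of q] by linarith+
  have key: "0 < (D - rho q^2) * M^2 + (\<alpha> * M^2 * \<bar>K\<bar> + K^2 / 4)"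
    using outside_norm_ball[OF \<alpha> rq far \<open>\<bar>zc q - zc p\<bar> \<le> - zc q\<close>] by (simp add: D_def M_def K_def)
  have K: "\<bar>K\<bar> \<le> 2 * T * (rho p * rho q)" and ip: "C * (rho p * rho q) \<le> xc p * xc q + yc p * yc q"
    using cone_pair_bounds[OF less_imp_le[OF T(1)] p(1) q(1) p(2) q(2)]
    by (simp_all add: K_def C_def rho_def)
  have C: "0 \<le> C" using small_cone_constants(1)[OF T(1) \<alpha> T(2)] by (simp add: C_def)
  \<comment> \<open>if \<open>q\<close> were not much closer to the axis, \<open>p\<close> would lie in the ball \<open>B(q, r_q)\<close>\<close>
  have "C * (C * rho p) * rho p \<le> C * rho q * rho p"
    using rqC C rp by (simp add: mult_left_mono mult_right_mono)
  hence "C^2 * rho p^2 \<le> C * (rho p * rho q)" by (simp add: power2_eq_square algebra_simps)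
  hence "D - rho q^2 \<le> (1 - 2 * C^2) * rho p^2"
    using ip unfolding D_def rho_sq by (simp add: power2_eq_square algebra_simps)
  hence "(D - rho q^2) * M^2 \<le> ((1 - 2 * C^2) * rho p^2) * M^2" by (rule mult_right_mono) simp
  hence horizontal: "(D - rho q^2) * M^2 \<le> (1 - 2 * C^2) * Q" by (simp add: Q_def mult.assoc)
  have "rho p * rho q \<le> rho p * rho p" using rqp rp by (intro mult_left_mono) auto
  moreover have "rho q * rho q \<le> (\<alpha> * M) * (\<alpha> * M)"
    using rho_le_alpha_rr[OF \<alpha> rq] rq by (intro mult_mono) (auto simp: M_def)
  hence "rho p^2 * (rho q * rho q) \<le> rho p^2 * ((\<alpha> * M) * (\<alpha> * M))" by (rule mult_left_mono) simp
  hence "(rho p * rho q)^2 \<le> rho p^2 * (\<alpha> * M)^2" by (simp only: power2_eq_square ac_simps)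
  ultimately have twist: "\<alpha> * M^2 * \<bar>K\<bar> + K^2 / 4 \<le> (2 * (T * \<alpha>) + (T * \<alpha>)^2) * Q"
    using twist_terms_bound[OF less_imp_le[OF \<alpha>] less_imp_le[OF T(1)] K, of "rho p^2" M]
    by (simp add: Q_def power2_eq_square)
  have "0 < (1 - 2 * C^2 + 2 * (T * \<alpha>) + (T * \<alpha>)^2) * Q"
    using key horizontal twist by (simp add: algebra_simps)
  moreover have "0 \<le> Q" by (simp add: Q_def)
  moreover have "1 - 2 * C^2 + 2 * (T * \<alpha>) + (T * \<alpha>)^2 < 0"
    using small_cone_constants(2)[OF T(1) \<alpha> T(2)] by (simp add: C_def)
  ultimately show False
    using mult_nonpos_nonneg[of "1 - 2 * C^2 + 2 * (T * \<alpha>) + (T * \<alpha>)^2" Q] by linarith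
qed

lemma one_minus_tan_sq_le_cos_double:
  assumes "\<bar>\<theta>\<bar> < pi / 2"
  shows "1 - 2 * (tan \<theta>)^2 \<le> cos (2 * \<theta>)"
proof -
  have "- (pi / 2) < \<theta>" "\<theta> < pi / 2" using assms by linarith+
  hence "cos \<theta> \<noteq> 0" using cos_gt_zero_pi by fastforce
  hence "(sin \<theta>)^2 = (tan \<theta>)^2 * (cos \<theta>)^2" by (simp add: tan_def power_divide)
  also have "\<dots> \<le> (tan \<theta>)^2" by (intro mult_left_le) (simp_all add: cos_squared_eq)
  finally show ?thesis by (simp add: cos_double_sin)
qed

lemma cone_coords:
  assumes "p \<in> cone \<theta>" "0 < tan \<theta>"
  shows "0 < xc p" "\<bar>yc p\<bar> \<le> tan \<theta> * xc p"
proof -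
  have "\<bar>yc p\<bar> < xc p * tan \<theta>" using assms(1) by (simp add: cone_def)
  thus "\<bar>yc p\<bar> \<le> tan \<theta> * xc p" by (simp add: mult.commute)
  show "0 < xc p"
    using \<open>\<bar>yc p\<bar> < xc p * tan \<theta>\<close> assms(2) by (smt (verit) zero_less_mult_pos2)
qed

lemma small_angle_tan:
  assumes "\<alpha> > 0" "0 < \<theta>" "\<theta> < arctan (1 / (8 * (\<alpha> + 1)))"
  shows "0 < tan \<theta>" "8 * tan \<theta> * (\<alpha> + 1) \<le> 1" "\<theta> < pi / 2"
proof -
  show "\<theta> < pi / 2" using assms(3) arctan_ubound by (rule less_trans)
  thus "0 < tan \<theta>" using assms(2) by (simp add: tan_gt_zero)
  have "tan \<theta> < tan (arctan (1 / (8 * (\<alpha> + 1))))"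
    using assms arctan_ubound \<open>\<theta> < pi / 2\<close> by (intro tan_monotone) auto
  thus "8 * tan \<theta> * (\<alpha> + 1) \<le> 1" using assms(1) by (simp add: tan_arctan field_simps)
qed

theorem lemma2p5:
  fixes \<alpha> :: real
  assumes "\<alpha> > 0" and "is_distance (d_alpha \<alpha>)"
  shows "\<exists>\<theta>1. 0 < \<theta>1 \<and> \<theta>1 < pi / 8 \<and>
    (\<forall>\<theta>. 0 < \<theta> \<and> \<theta> < \<theta>1 \<longrightarrow>
      (\<forall>p q. zc q \<le> 0 \<and> zc p \<le> 0 \<and> rho q \<le> rho p \<and>
             p \<in> cone \<theta> \<and> q \<in> cone \<theta> \<and>
             q \<notin> hball \<alpha> p (rr \<alpha> p) \<and> p \<notin> hball \<alpha> q (rr \<alpha> q)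
         \<longrightarrow> zc q < 2 * zc p \<and> rho q < rho p * cos (2 * \<theta>)))"
proof -
  define \<theta>1 where "\<theta>1 = min (pi / 16) (arctan (1 / (8 * (\<alpha> + 1))))"
  have "0 < \<theta>1" using assms(1) by (simp add: \<theta>1_def)
  moreover have "\<theta>1 \<le> pi / 16" by (simp add: \<theta>1_def)
  moreover have "zc q < 2 * zc p \<and> rho q < rho p * cos (2 * \<theta>)"
    if \<theta>: "0 < \<theta>" "\<theta> < \<theta>1" and z: "zc q \<le> 0" "zc p \<le> 0" and rqp: "rho q \<le> rho p"
      and cone: "p \<in> cone \<theta>" "q \<in> cone \<theta>"
      and far: "q \<notin> hball \<alpha> p (rr \<alpha> p)" "p \<notin> hball \<alpha> q (rr \<alpha> q)" for \<theta> p q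
  proof -
    have T: "0 < tan \<theta>" "8 * tan \<theta> * (\<alpha> + 1) \<le> 1" "\<theta> < pi / 2"
      using small_angle_tan[OF assms(1) \<theta>(1)] \<theta>(2) by (auto simp: \<theta>1_def)
    note p = cone_coords[OF cone(1) T(1)] and q = cone_coords[OF cone(2) T(1)]
    have zsep: "zc q < 2 * zc p"
      using z_separation[OF assms(1) T(1,2) p q z(2,1) rqp far(1)] .
    have "rho q < (1 - 2 * (tan \<theta>)^2) * rho p"
      using rho_separation[OF assms(1) T(1,2) p q z(2) zsep rqp far(2)] .
    also have "\<dots> \<le> cos (2 * \<theta>) * rho p"
      using one_minus_tan_sq_le_cos_double[of \<theta>] \<theta>(1) T(3)
      by (intro mult_right_mono) (auto simp: rho_def)
    finally show ?thesis using zsep by (simp add: mult.commute)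
  qed
  ultimately show ?thesis using pi_gt_zero by (intro exI[of _ \<theta>1]) auto
qed

end
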